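(* Let $Y$ be a topological space such that the diagonal $\Delta Y=\{(y,y):y\in Y\}$ is statistically closed in $Y\times Y$, and let $X$ be an open subspace of $Y$ which is not statistically compact. Define $f:Y\to X^s$ by $f(x)=x$ if $x\in X$ and $f(x)=\infty^X$ otherwise. Then $f$ is statistically continuous, where $X^s$ carries the topology $\tau^X_s$.
   Context: For $A\subseteq\mathbb{N}$ let $d_n(A)=|A\cap\{1,\dots,n\}|/n$, $\overline{d}(A)=\limsup_n d_n(A)$, $\underline{d}(A)=\liminf_n d_n(A)$, and $d(A)$ their common value when equal. A sequence in $X$ is a map from an infinite subset $M\subseteq\mathbb{N}$ into $X$, written $(x_n)_{n\in M}$; a subsequence is $(x_n)_{n\in N}$ with $N\subseteq M$ infinite. It is nonthin if $\overline{d}(M)>0$. A nonthin sequence $(x_n)_{n\in M}$ is statistically convergent to $a\in X$ if for every open $U\ni a$, $d(\{n\in M:x_n\notin U\})=0$. The statistical closure $\overline{F}^{ST}$ of $F\subseteq X$ is the set of $x\in X$ such that some nonthin sequence in $F$ is statistically convergent to $x$; $F$ is statistically closed if $\overline{F}^{ST}=F$. A topological space is statistically compact if every nonthin sequence in it has a nonthin subsequence that is statistically convergent to some point of the space; a subset is statistically compact if it is so in the subspace topology. For $(X,\tau)$ not statistically compact, the one point statistical compactification is $X^s=X\cup\{\infty^X\}$ ($\infty^X\notin X$) with topology $\tau^X_s=\tau\cup\{X^s\setminus C: C$ closed and statistically compact subset of $X\}$. A function $f$ is statistically continuous if whenever a nonthin sequence $(x_n)_{n\in K}$ statistically converges to $x$,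 $(f(x_n))_{n\in K}$ statistically converges to $f(x)$. *)

theory Defs
  imports "HOL-Analysis.Analysis"
begin

definition dens_n :: "nat set \<Rightarrow> nat \<Rightarrow> real" where
  "dens_n A n = real (card (A \<inter> {1..n})) / real n"

definition upper_density :: "nat set \<Rightarrow> ereal" where
  "upper_density A = limsup (\<lambda>n. ereal (dens_n A n))"

definition density_zero :: "nat set \<Rightarrow> bool" where
  "density_zero A \<longleftrightarrow> (\<lambda>n. dens_n A n) \<longlonglongrightarrow> 0"

definition nonthin :: "nat set \<Rightarrow> bool" where
  "nonthin M \<longleftrightarrow> upper_density M > 0"

definition stat_conv :: "'a topology \<Rightarrow> nat set \<Rightarrow> (nat \<Rightarrow> 'a) \<Rightarrow> 'a \<Rightarrow> bool" where
  "stat_conv T M x a \<longleftrightarrow>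
     nonthin M \<and> (\<forall>n\<in>M. x n \<in> topspace T) \<and> a \<in> topspace T \<and>
     (\<forall>U. openin T U \<and> a \<in> U \<longrightarrow> density_zero {n \<in> M. x n \<notin> U})"

definition stat_closure :: "'a topology \<Rightarrow> 'a set \<Rightarrow> 'a set" where
  "stat_closure T F = {a \<in> topspace T. \<exists>M x. nonthin M \<and> (\<forall>n\<in>M. x n \<in> F) \<and> stat_conv T M x a}"

definition stat_closed :: "'a topology \<Rightarrow> 'a set \<Rightarrow> bool" where
  "stat_closed T F \<longleftrightarrow> stat_closure T F = F"

definition stat_compact :: "'a topology \<Rightarrow> bool" where
  "stat_compact T \<longleftrightarrow>
     (\<forall>M x. nonthin M \<and> (\<forall>n\<in>M. x n \<in> topspace T) \<longrightarrow>
        (\<exists>N. N \<subseteq> M \<and> nonthin N \<and> (\<exists>a. stat_conv T N x a)))"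

definition stat_continuous :: "'a topology \<Rightarrow> 'b topology \<Rightarrow> ('a \<Rightarrow> 'b) \<Rightarrow> bool" where
  "stat_continuous T S f \<longleftrightarrow>
     (\<forall>K x a. stat_conv T K x a \<longrightarrow> stat_conv S K (f \<circ> x) (f a))"

text \<open>One point statistical compactification X^s = X \<union> {\<infinity>}; points of X are
  represented as Some x and the point \<infinity>^X as None.\<close>
definition stat_compactification :: "'a topology \<Rightarrow> 'a option topology" where
  "stat_compactification X = topology (\<lambda>V.
     (\<exists>U. openin X U \<and> V = Some ` U) \<or>
     (\<exists>C. closedin X C \<and> stat_compact (subtopology X C) \<and>
          V = insert None (Some ` (topspace X - C))))"

end

theory Submission
  imports Defs
begin

text \<open>Let \<open>x\<close> statistically converge to \<open>a\<close> in \<open>Y\<close>. A basic open set of \<open>X\<^sup>s\<close> around \<open>f a\<close>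
  is either open in \<open>X\<close>, hence in \<open>Y\<close>, and then it pulls back to a neighbourhood of \<open>a\<close>;
  or it is the complement of a statistically compact \<open>C \<subseteq> X\<close> with \<open>a \<notin> C\<close>. In the latter case,
  if the terms falling into \<open>C\<close> had positive upper density, statistical compactness would
  give a nonthin subsequence converging to some \<open>c \<in> C\<close>, which also converges to \<open>a\<close>; the pairs
  \<open>(x\<^sub>n, x\<^sub>n)\<close> then converge to \<open>(c, a)\<close>, so \<open>(c, a)\<close> lies in the diagonal and \<open>c = a\<close>,
  a contradiction.\<close>

lemma dens_n_nonneg: "0 \<le> dens_n A n"
  by (simp add: dens_n_def)

lemma dens_n_mono: "A \<subseteq> B \<Longrightarrow> dens_n A n \<le> dens_n B n"
  unfolding dens_n_def by (intro divide_right_mono) (auto intro!: card_mono)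

lemma dens_n_Un_le: "dens_n (A \<union> B) n \<le> dens_n A n + dens_n B n"
proof -
  have "card ((A \<union> B) \<inter> {1..n}) \<le> card (A \<inter> {1..n}) + card (B \<inter> {1..n})"
    by (metis Int_Un_distrib2 card_Un_le)
  then show ?thesis
    unfolding dens_n_def add_divide_distrib[symmetric]
    by (intro divide_right_mono) linarith+
qed

lemma density_zero_subset: "density_zero B \<Longrightarrow> A \<subseteq> B \<Longrightarrow> density_zero A"
  unfolding density_zero_def
  by (rule tendsto_sandwich[of "\<lambda>n. 0" _ _ "\<lambda>n. dens_n B n"]) (auto simp: dens_n_nonneg dens_n_mono)

lemma density_zero_Un: "density_zero A \<Longrightarrow> density_zero B \<Longrightarrow> density_zero (A \<union> B)"
  unfolding density_zero_def
  by (rule tendsto_sandwich[of "\<lambda>n. 0" _ _ "\<lambda>n. dens_n A n + dens_n B n"])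
     (auto simp: dens_n_nonneg dens_n_Un_le intro: tendsto_add_zero)

lemma density_zero_empty: "density_zero {}"
  unfolding density_zero_def dens_n_def by simp

lemma nonthin_iff_not_density_zero: "nonthin A \<longleftrightarrow> \<not> density_zero A"
proof -
  let ?d = "\<lambda>n. ereal (dens_n A n)"
  have "0 \<le> liminf ?d"
    by (rule Liminf_bounded) (simp add: dens_n_nonneg)
  moreover have "liminf ?d \<le> limsup ?d"
    by (rule Liminf_le_Limsup) simp
  ultimately have "limsup ?d \<le> 0 \<longleftrightarrow> (?d \<longlongrightarrow> 0) sequentially"
    using Liminf_eq_Limsup[of sequentially ?d 0] lim_imp_Limsup[of sequentially ?d 0] by fastforce
  then show ?thesis
    unfolding nonthin_def upper_density_def density_zero_def
    by (metis lim_ereal not_le zero_ereal_def)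
qed

lemma stat_conv_subset:
  assumes "stat_conv T K x a" "N \<subseteq> K" "nonthin N"
  shows "stat_conv T N x a"
  using assms unfolding stat_conv_def by (auto elim!: density_zero_subset)

lemma stat_conv_subtopology_mono:
  assumes "stat_conv (subtopology T A) N x a" "a \<in> B" "\<forall>n\<in>N. x n \<in> A \<inter> B"
  shows "stat_conv (subtopology T B) N x a"
  unfolding stat_conv_def
proof (intro conjI ballI allI impI)
  show "nonthin N" "\<And>n. n \<in> N \<Longrightarrow> x n \<in> topspace (subtopology T B)"
    "a \<in> topspace (subtopology T B)"
    using assms unfolding stat_conv_def by auto
next
  fix U assume "openin (subtopology T B) U \<and> a \<in> U"
  then obtain W where W: "openin T W" "U = W \<inter> B" "a \<in> W"
    by (auto simp: openin_subtopology)
  then have "openin (subtopology T A) (W \<inter> A) \<and> a \<in> W \<inter> A"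
    using assms(1) unfolding stat_conv_def by (auto simp: openin_subtopology)
  then have "density_zero {n \<in> N. x n \<notin> W \<inter> A}"
    using assms(1) unfolding stat_conv_def by blast
  then show "density_zero {n \<in> N. x n \<notin> U}"
    by (rule density_zero_subset) (use W assms(3) in auto)
qed

lemma stat_conv_Pair:
  assumes "stat_conv S N x a" "stat_conv T N y b"
  shows "stat_conv (prod_topology S T) N (\<lambda>n. (x n, y n)) (a, b)"
  unfolding stat_conv_def
proof (intro conjI ballI allI impI)
  show "nonthin N" "\<And>n. n \<in> N \<Longrightarrow> (x n, y n) \<in> topspace (prod_topology S T)"
    "(a, b) \<in> topspace (prod_topology S T)"
    using assms unfolding stat_conv_def by auto
next
  fix W assume "openin (prod_topology S T) W \<and> (a, b) \<in> W"
  then obtain U V where UV: "openin S U" "openin T V" "a \<in> U" "b \<in> V" "U \<times> V \<subseteq> W"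
    unfolding openin_prod_topology_alt by blast
  have "density_zero ({n \<in> N. x n \<notin> U} \<union> {n \<in> N. y n \<notin> V})"
    using assms UV unfolding stat_conv_def by (blast intro: density_zero_Un)
  then show "density_zero {n \<in> N. (x n, y n) \<notin> W}"
    by (rule density_zero_subset) (use UV in auto)
qed

lemma stat_limit_unique:
  assumes diagonal: "stat_closed (prod_topology Y Y) {(y, y) | y. y \<in> topspace Y}"
    and "stat_conv Y N x a" "stat_conv Y N x b"
  shows "a = b"
proof -
  have conv: "stat_conv (prod_topology Y Y) N (\<lambda>n. (x n, x n)) (a, b)"
    using assms(2,3) by (rule stat_conv_Pair)
  then have "nonthin N" "(a, b) \<in> topspace (prod_topology Y Y)"
    unfolding stat_conv_def by auto
  moreover have "\<forall>n\<in>N. (x n, x n) \<in> {(y, y) | y. y \<in> topspace Y}"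
    using assms(2) unfolding stat_conv_def by blast
  ultimately have "(a, b) \<in> stat_closure (prod_topology Y Y) {(y, y) | y. y \<in> topspace Y}"
    unfolding stat_closure_def using conv by (intro CollectI conjI exI) auto
  then show ?thesis
    using diagonal unfolding stat_closed_def by auto
qed

lemma stat_compact_empty: "stat_compact (subtopology X {})"
  unfolding stat_compact_def nonthin_iff_not_density_zero by (auto simp: density_zero_empty)

lemma stat_compact_subseq_in_superset:
  assumes "stat_compact (subtopology X C)" "C \<subseteq> D"
    and "nonthin M" "\<forall>n\<in>M. x n \<in> topspace X \<inter> C"
  obtains N a where "N \<subseteq> M" "nonthin N" "stat_conv (subtopology X D) N x a" "a \<in> C"
proof -
  have "\<forall>n\<in>M. x n \<in> topspace (subtopology X C)"
    using assms(4) by simp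
  then obtain N a where N: "N \<subseteq> M" "nonthin N" "stat_conv (subtopology X C) N x a"
    using assms(1,3) unfolding stat_compact_def by blast
  moreover have "a \<in> C"
    using N(3) by (simp add: stat_conv_def)
  ultimately have "stat_conv (subtopology X D) N x a"
    using assms(2,4) by (intro stat_conv_subtopology_mono[OF N(3)]) auto
  with N \<open>a \<in> C\<close> that show ?thesis by blast
qed

lemma stat_compact_closedin_subset:
  assumes C: "stat_compact (subtopology X C)" and D: "closedin X D" "D \<subseteq> C"
  shows "stat_compact (subtopology X D)"
  unfolding stat_compact_def
proof (intro allI impI)
  fix M x assume Mx: "nonthin M \<and> (\<forall>n\<in>M. x n \<in> topspace (subtopology X D))"
  then obtain N a where N: "N \<subseteq> M" "nonthin N" "stat_conv (subtopology X C) N x a"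
    using C D(2) unfolding stat_compact_def by (metis topspace_subtopology Int_iff subsetD)
  have "a \<in> D"
  proof (rule ccontr)
    assume "a \<notin> D"
    then have "openin (subtopology X C) ((topspace X - D) \<inter> C) \<and> a \<in> (topspace X - D) \<inter> C"
      using N(3) D(1) unfolding stat_conv_def by (auto intro: openin_subtopology_Int openin_diff)
    then have "density_zero {n \<in> N. x n \<notin> (topspace X - D) \<inter> C}"
      using N(3) unfolding stat_conv_def by blast
    moreover have "{n \<in> N. x n \<notin> (topspace X - D) \<inter> C} = N"
      using N(1) Mx by auto
    ultimately show False
      using N(2) nonthin_iff_not_density_zero by auto
  qed
  then have "stat_conv (subtopology X D) N x a"
    using N(1) Mx D(2) by (intro stat_conv_subtopology_mono[OF N(3)]) auto
  with N show "\<exists>N\<subseteq>M. nonthin N \<and> (\<exists>a. stat_conv (subtopology X D) N x a)"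
    by blast
qed

lemma stat_compact_Un:
  assumes "stat_compact (subtopology X C)" "stat_compact (subtopology X D)"
  shows "stat_compact (subtopology X (C \<union> D))"
  unfolding stat_compact_def
proof (intro allI impI)
  fix M x assume Mx: "nonthin M \<and> (\<forall>n\<in>M. x n \<in> topspace (subtopology X (C \<union> D)))"
  define MC where "MC = {n \<in> M. x n \<in> C}"
  define MD where "MD = {n \<in> M. x n \<in> D}"
  have "M = MC \<union> MD"
    using Mx unfolding MC_def MD_def by auto
  then have "nonthin MC \<or> nonthin MD"
    using Mx density_zero_Un unfolding nonthin_iff_not_density_zero by metis
  then obtain N a where "N \<subseteq> M" "nonthin N" "stat_conv (subtopology X (C \<union> D)) N x a"
  proof
    assume "nonthin MC"
    then show thesis
      using Mx assms(1) that
      by (elim stat_compact_subseq_in_superset[where D = "C \<union> D"]) (auto simp: MC_def)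
  next
    assume "nonthin MD"
    then show thesis
      using Mx assms(2) that
      by (elim stat_compact_subseq_in_superset[where D = "C \<union> D"]) (auto simp: MD_def)
  qed
  then show "\<exists>N\<subseteq>M. nonthin N \<and> (\<exists>a. stat_conv (subtopology X (C \<union> D)) N x a)"
    by blast
qed

definition compactification_open :: "'a topology \<Rightarrow> 'a option set \<Rightarrow> bool" where
  "compactification_open X V \<longleftrightarrow>
     (\<exists>U. openin X U \<and> V = Some ` U) \<or>
     (\<exists>C. closedin X C \<and> stat_compact (subtopology X C) \<and>
          V = insert None (Some ` (topspace X - C)))"

lemma compactification_open_Int:
  assumes "compactification_open X S" "compactification_open X T"
  shows "compactification_open X (S \<inter> T)"
  using assms[unfolded compactification_open_def]
proof (elim disjE exE conjE)
  fix U U' assume "openin X U" "S = Some ` U" "openin X U'" "T = Some ` U'"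
  then show ?thesis unfolding compactification_open_def
    by (intro disjI1 exI[of _ "U \<inter> U'"]) auto
next
  fix U C assume "openin X U" "S = Some ` U" "closedin X C" "T = insert None (Some ` (topspace X - C))"
  then show ?thesis unfolding compactification_open_def
    by (intro disjI1 exI[of _ "U - C"]) (auto dest: openin_subset)
next
  fix C U assume "closedin X C" "S = insert None (Some ` (topspace X - C))" "openin X U" "T = Some ` U"
  then show ?thesis unfolding compactification_open_def
    by (intro disjI1 exI[of _ "U - C"]) (auto dest: openin_subset)
next
  fix C C' assume "closedin X C" "stat_compact (subtopology X C)" "S = insert None (Some ` (topspace X - C))"
    "closedin X C'" "stat_compact (subtopology X C')" "T = insert None (Some ` (topspace X - C'))"
  then show ?thesis unfolding compactification_open_def
    by (intro disjI2 exI[of _ "C \<union> C'"]) (auto simp: stat_compact_Un)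
qed

lemma compactification_open_Union:
  assumes "\<forall>V\<in>\<K>. compactification_open X V"
  shows "compactification_open X (\<Union>\<K>)"
proof -
  define \<U> where "\<U> = {U. openin X U \<and> Some ` U \<in> \<K>}"
  define \<C> where "\<C> = {C. closedin X C \<and> stat_compact (subtopology X C) \<and>
                        insert None (Some ` (topspace X - C)) \<in> \<K>}"
  have \<U>_open: "openin X (\<Union>\<U>)"
    unfolding \<U>_def by auto
  have \<K>_below: "V \<subseteq> Some ` \<Union>\<U> \<union> (\<Union>C\<in>\<C>. insert None (Some ` (topspace X - C)))" if "V \<in> \<K>" for V
  proof -
    have "compactification_open X V"
      using assms that by blast
    then consider U where "openin X U" "V = Some ` U"
      | C where "closedin X C" "stat_compact (subtopology X C)"
        "V = insert None (Some ` (topspace X - C))"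
      unfolding compactification_open_def by blast
    then show ?thesis
    proof cases
      case 1
      then have "U \<in> \<U>"
        using that unfolding \<U>_def by simp
      with 1 show ?thesis
        by (intro le_supI1) (simp add: image_mono Union_upper)
    next
      case 2
      then have "C \<in> \<C>"
        using that unfolding \<C>_def by simp
      show ?thesis
        unfolding 2(3) by (intro le_supI2 UN_upper \<open>C \<in> \<C>\<close>)
    qed
  qed
  have \<K>_eq: "\<Union>\<K> = Some ` \<Union>\<U> \<union> (\<Union>C\<in>\<C>. insert None (Some ` (topspace X - C)))"
  proof (rule equalityI)
    show "\<Union>\<K> \<subseteq> Some ` \<Union>\<U> \<union> (\<Union>C\<in>\<C>. insert None (Some ` (topspace X - C)))"
      using \<K>_below by (rule Union_least)
    show "Some ` \<Union>\<U> \<union> (\<Union>C\<in>\<C>. insert None (Some ` (topspace X - C))) \<subseteq> \<Union>\<K>"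
      unfolding \<U>_def \<C>_def by blast
  qed
  show ?thesis
  proof (cases "\<C> = {}")
    case True
    then have "\<Union>\<K> = Some ` \<Union>\<U>"
      using \<K>_eq by simp
    with \<U>_open show ?thesis
      unfolding compactification_open_def by blast
  next
    case False
    then obtain C0 where C0: "C0 \<in> \<C>" by blast
    define D where "D = \<Inter>\<C> - \<Union>\<U>"
    have "closedin X (\<Inter>\<C>)"
      using False unfolding \<C>_def by (intro closedin_Inter) auto
    then have D_closed: "closedin X D"
      unfolding D_def using \<U>_open by (rule closedin_diff)
    have "stat_compact (subtopology X C0)" "D \<subseteq> C0"
      using C0 unfolding \<C>_def D_def by auto
    with D_closed have D_compact: "stat_compact (subtopology X D)"
      by (blast intro: stat_compact_closedin_subset)
    have "(\<Union>C\<in>\<C>. insert None (Some ` (topspace X - C))) = insert None (Some ` (topspace X - \<Inter>\<C>))"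
      using False by auto
    moreover have "topspace X - D = \<Union>\<U> \<union> (topspace X - \<Inter>\<C>)"
      using openin_subset[OF \<U>_open] unfolding D_def by auto
    ultimately have "\<Union>\<K> = insert None (Some ` (topspace X - D))"
      unfolding \<K>_eq by (simp add: image_Un)
    with D_closed D_compact show ?thesis
      unfolding compactification_open_def by blast
  qed
qed

lemma openin_stat_compactification:
  "openin (stat_compactification X) = compactification_open X"
proof -
  have "istopology (compactification_open X)"
    unfolding istopology_def
    by (simp add: compactification_open_Int compactification_open_Union)
  then show ?thesis
    unfolding stat_compactification_def compactification_open_def[abs_def]
    by (rule topology_inverse')
qed

lemma topspace_stat_compactification:
  "topspace (stat_compactification X) = insert None (Some ` topspace X)"
proof (rule subset_antisym)
  have "compactification_open X V \<Longrightarrow> V \<subseteq> insert None (Some ` topspace X)" for V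
    unfolding compactification_open_def by (auto dest: openin_subset)
  then show "topspace (stat_compactification X) \<subseteq> insert None (Some ` topspace X)"
    using openin_topspace[of "stat_compactification X"]
    unfolding openin_stat_compactification by blast
  have "compactification_open X (insert None (Some ` topspace X))"
    unfolding compactification_open_def using stat_compact_empty[of X]
    by (intro disjI2 exI[of _ "{}"]) simp
  then show "insert None (Some ` topspace X) \<subseteq> topspace (stat_compactification X)"
    by (metis openin_stat_compactification openin_subset)
qed

lemma density_zero_stat_compact:
  assumes diagonal: "stat_closed (prod_topology Y Y) {(y, y) | y. y \<in> topspace Y}"
    and C: "stat_compact (subtopology Y C)" and conv: "stat_conv Y K x a" and "a \<notin> C"
  shows "density_zero {n \<in> K. x n \<in> C}"
proof (rule ccontr)
  define L where "L = {n \<in> K. x n \<in> C}"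
  assume "\<not> density_zero {n \<in> K. x n \<in> C}"
  then have "nonthin L"
    unfolding L_def nonthin_iff_not_density_zero .
  moreover have "\<forall>n\<in>L. x n \<in> topspace Y \<inter> C"
    using conv unfolding L_def stat_conv_def by auto
  ultimately obtain N c where N: "N \<subseteq> L" "nonthin N" "c \<in> C"
    "stat_conv (subtopology Y (topspace Y \<union> C)) N x c"
    using C by (elim stat_compact_subseq_in_superset[where D = "topspace Y \<union> C"]) auto
  then have "stat_conv Y N x c"
    by (simp add: subtopology_superset)
  moreover have "stat_conv Y N x a"
    using N(1,2) unfolding L_def by (intro stat_conv_subset[OF conv]) auto
  ultimately have "c = a"
    by (rule stat_limit_unique[OF diagonal])
  with N(3) \<open>a \<notin> C\<close> show False by simp
qed

lemma stat_compactification_neighbourhood_cases: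
  assumes X: "openin Y X"
    and V: "openin (stat_compactification (subtopology Y X)) V" "(if a \<in> X then Some a else None) \<in> V"
  obtains (open_nbhd) U where "openin Y U" "a \<in> U"
      "\<And>y. y \<in> U \<Longrightarrow> (if y \<in> X then Some y else None) \<in> V"
  | (compact_complement) C where "stat_compact (subtopology Y C)" "a \<notin> C"
      "\<And>y. y \<notin> C \<Longrightarrow> (if y \<in> X then Some y else None) \<in> V"
proof -
  have "topspace (subtopology Y X) = X"
    using openin_subset[OF X] by auto
  with V(1) consider U where "openin (subtopology Y X) U" "V = Some ` U"
    | C where "closedin (subtopology Y X) C" "stat_compact (subtopology (subtopology Y X) C)"
        "V = insert None (Some ` (X - C))"
    unfolding openin_stat_compactification compactification_open_def by auto
  then show thesis
  proof cases
    case 1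
    then have "openin Y U" "U \<subseteq> X"
      using openin_open_subtopology[OF X] by auto
    with 1 V(2) show thesis
      by (intro open_nbhd[of U]) (auto split: if_splits)
  next
    case 2
    then have "C \<subseteq> X"
      using closedin_subset by fastforce
    then have "subtopology (subtopology Y X) C = subtopology Y C"
      by (simp add: subtopology_subtopology Int_absorb1)
    with 2 \<open>C \<subseteq> X\<close> V(2) show thesis
      by (intro compact_complement[of C]) (auto split: if_splits)
  qed
qed

theorem mainTheorem19:
  fixes Y :: "'a topology" and X :: "'a set"
  assumes "stat_closed (prod_topology Y Y) {(y, y) | y. y \<in> topspace Y}"
    and "openin Y X"
    and "\<not> stat_compact (subtopology Y X)"
  shows "stat_continuous Y (stat_compactification (subtopology Y X))
           (\<lambda>y. if y \<in> X then Some y else None)"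
  unfolding stat_continuous_def
proof (intro allI impI)
  \<comment> \<open>The third hypothesis only makes \<open>X\<^sup>s\<close> a genuine compactification; the proof does not need it.\<close>
  fix K x a assume conv: "stat_conv Y K x a"
  let ?f = "\<lambda>y. if y \<in> X then Some y else None"
  have "?f y \<in> topspace (stat_compactification (subtopology Y X))" for y
    using openin_subset[OF assms(2)] by (auto simp: topspace_stat_compactification)
  moreover have "density_zero {n \<in> K. (?f \<circ> x) n \<notin> V}"
    if "openin (stat_compactification (subtopology Y X)) V" "?f a \<in> V" for V
    using assms(2) that
  proof (cases rule: stat_compactification_neighbourhood_cases)
    case (open_nbhd U)
    then have "density_zero {n \<in> K. x n \<notin> U}"
      using conv unfolding stat_conv_def by blast
    then show ?thesis
      by (rule density_zero_subset) (use open_nbhd(3) in fastforce)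
  next
    case (compact_complement C)
    then have "density_zero {n \<in> K. x n \<in> C}"
      using density_zero_stat_compact[OF assms(1)] conv by blast
    then show ?thesis
      by (rule density_zero_subset) (use compact_complement(3) in fastforce)
  qed
  ultimately show "stat_conv (stat_compactification (subtopology Y X)) K (?f \<circ> x) (?f a)"
    using conv unfolding stat_conv_def by simp
qed

end
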